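(* There is a unique family of elements $\chi_\lambda\in\mathbb{Z}[(1-[-\alpha])^{-1}]_{\alpha\in\Delta}$, indexed by $\lambda\in\bigcup_{i\in I}W\cdot\omega_i$, such that $\chi_{\omega_i}=1$ for all $i\in I$ and, for all $w\in W$ and $i\in I$ with $l(ws_i)=l(w)+1$, $$\chi_{ws_i(\omega_i)}\,\chi_{w(\omega_i)}=(1-[-w(\alpha_i)])^{-1}\prod_{j\neq i}\chi_{w(\omega_j)}^{-C_{i,j}}.$$
   Context: $\mathfrak{g}$ simple with index set $I$, Cartan matrix $C$, weight lattice $P$, fundamental weights $\omega_i$, simple roots $\alpha_i$, root system $\Delta$, Weyl group $W$ with length function $l$. The $W$-orbits $W\cdot\omega_i$ ($i\in I$) are pairwise disjoint, so $\lambda\in\bigcup_iW\omega_i$ determines $i$. $[\mu]$ ($\mu\in P$) denotes the basis element of the group ring $\mathbb{Z}[P]$, with $[\mu][\nu]=[\mu+\nu]$; $\mathbb{Z}[(1-[-\alpha])^{-1}]_{\alpha\in\Delta}$ is the subring of the fraction field of $\mathbb{Z}[P]$ generated by the $(1-[-\alpha])^{-1}$ (note $(1-[-\alpha])\in\mathbb{Z}[P]$ as well since $\mathbb{Z}[P]$... the ring is taken as generated over $\mathbb{Z}$ by these inverses and inside the fraction field). *)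

theory Defs
  imports Complex_Main "HOL-Library.Poly_Mapping" "HOL-Computational_Algebra.Fraction_Field"
begin

(* Index set I: a finite type 'i (the linorder is only used to obtain the
   idom instance of the group ring; every finite set admits one).
   Weight lattice P = Z-span of the fundamental weights, coordinates w.r.t.
   the fundamental weights: 'i \<Rightarrow>\<^sub>0 int.  Group ring Z[P]: (P \<Rightarrow>\<^sub>0 int). *)

type_synonym 'i weight = "'i \<Rightarrow>\<^sub>0 int"
type_synonym 'i grpring = "'i weight \<Rightarrow>\<^sub>0 int"

(* C is the Cartan matrix of a (finite-dimensional complex) simple Lie algebra:
   an indecomposable generalized Cartan matrix of finite type
   (symmetrizable with positive definite symmetrization). *)
definition cartan_simple :: "('i::finite \<Rightarrow> 'i \<Rightarrow> int) \<Rightarrow> bool" where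
  "cartan_simple C \<longleftrightarrow>
     (\<forall>i. C i i = 2) \<and> (\<forall>i j. i \<noteq> j \<longrightarrow> C i j \<le> 0) \<and>
     (\<forall>i j. C i j = 0 \<longleftrightarrow> C j i = 0) \<and>
     (\<exists>e::'i \<Rightarrow> real. (\<forall>i. e i > 0) \<and>
        (\<forall>i j. of_int (C i j) * e j = of_int (C j i) * e i) \<and>
        (\<forall>x::'i \<Rightarrow> real. (\<exists>i. x i \<noteq> 0) \<longrightarrow>
            (\<Sum>i\<in>UNIV. \<Sum>j\<in>UNIV. x i * of_int (C i j) * e j * x j) > 0)) \<and>
     (\<forall>J::'i set. J \<noteq> {} \<and> J \<noteq> UNIV \<longrightarrow> (\<exists>i\<in>J. \<exists>j\<in>-J. C i j \<noteq> 0))"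

definition fw :: "'i \<Rightarrow> 'i weight" where
  "fw i = Poly_Mapping.single i 1"

(* simple root \<alpha>_i = \<Sum>_j C_{i,j} \<omega>_j, i.e. C_{i,j} = <\<alpha>_i, \<alpha>_j^\<or>> *)
definition sr :: "('i::finite \<Rightarrow> 'i \<Rightarrow> int) \<Rightarrow> 'i \<Rightarrow> 'i weight" where
  "sr C i = (\<Sum>j\<in>UNIV. Poly_Mapping.single j (C i j))"

(* simple reflection s_i(\<lambda>) = \<lambda> - <\<lambda>, \<alpha>_i^\<or>> \<alpha>_i, where <\<lambda>, \<alpha>_i^\<or>> = Poly_Mapping.lookup \<lambda> i *)
definition srefl :: "('i::finite \<Rightarrow> 'i \<Rightarrow> int) \<Rightarrow> 'i \<Rightarrow> 'i weight \<Rightarrow> 'i weight" where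
  "srefl C i lam = lam - (\<Sum>j\<in>UNIV. Poly_Mapping.single j (Poly_Mapping.lookup lam i * C i j))"

definition wprod :: "('i::finite \<Rightarrow> 'i \<Rightarrow> int) \<Rightarrow> 'i list \<Rightarrow> 'i weight \<Rightarrow> 'i weight" where
  "wprod C is = foldr (\<lambda>i f. srefl C i \<circ> f) is id"

definition weyl :: "('i::finite \<Rightarrow> 'i \<Rightarrow> int) \<Rightarrow> ('i weight \<Rightarrow> 'i weight) set" where
  "weyl C = range (wprod C)"

definition wlen :: "('i::finite \<Rightarrow> 'i \<Rightarrow> int) \<Rightarrow> ('i weight \<Rightarrow> 'i weight) \<Rightarrow> nat" where
  "wlen C w = (LEAST k. \<exists>is. length is = k \<and> wprod C is = w)"

definition roots :: "('i::finite \<Rightarrow> 'i \<Rightarrow> int) \<Rightarrow> 'i weight set" where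
  "roots C = {w (sr C i) | w i. w \<in> weyl C}"

definition wt_orbits :: "('i::finite \<Rightarrow> 'i \<Rightarrow> int) \<Rightarrow> 'i weight set" where
  "wt_orbits C = {w (fw i) | w i. w \<in> weyl C}"

definition gb :: "'i weight \<Rightarrow> 'i grpring" where
  "gb \<mu> = Poly_Mapping.single \<mu> 1"

definition emb :: "'a::idom \<Rightarrow> 'a fract" where
  "emb x = Fract x 1"

inductive_set gen_subring :: "'a::comm_ring_1 set \<Rightarrow> 'a set" for S where
  gen: "x \<in> S \<Longrightarrow> x \<in> gen_subring S"
| one: "1 \<in> gen_subring S"
| add: "x \<in> gen_subring S \<Longrightarrow> y \<in> gen_subring S \<Longrightarrow> x + y \<in> gen_subring S"
| neg: "x \<in> gen_subring S \<Longrightarrow> - x \<in> gen_subring S"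
| mult: "x \<in> gen_subring S \<Longrightarrow> y \<in> gen_subring S \<Longrightarrow> x * y \<in> gen_subring S"

definition denom_ring :: "('i::{finite,linorder} \<Rightarrow> 'i \<Rightarrow> int) \<Rightarrow> ('i grpring) fract set" where
  "denom_ring C = gen_subring {inverse (emb (1 - gb (- a))) | a. a \<in> roots C}"

definition chi_family :: "('i::{finite,linorder} \<Rightarrow> 'i \<Rightarrow> int) \<Rightarrow> ('i weight \<Rightarrow> ('i grpring) fract) \<Rightarrow> bool" where
  "chi_family C \<chi> \<longleftrightarrow>
     (\<forall>lam\<in>wt_orbits C. \<chi> lam \<in> denom_ring C) \<and>
     (\<forall>i. \<chi> (fw i) = 1) \<and>
     (\<forall>w\<in>weyl C. \<forall>i. wlen C (w \<circ> srefl C i) = wlen C w + 1 \<longrightarrow>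
        \<chi> ((w \<circ> srefl C i) (fw i)) * \<chi> (w (fw i)) =
          inverse (emb (1 - gb (- w (sr C i)))) *
          (\<Prod>j\<in>UNIV - {i}. \<chi> (w (fw j)) powi (- C i j)))"

end

theory Submission
  imports Defs
begin

text \<open>
  For \<open>\<lambda> = w \<omega>\<^sub>j\<close> put \<open>\<chi>\<^sub>\<lambda> = \<Prod> (1 - [-\<beta>])\<^bsup>\<langle>\<lambda>, \<beta>\<^sup>\<or>\<rangle>\<^esup>\<close>, the product
  over the positive roots \<open>\<beta>\<close> with \<open>\<langle>\<lambda>, \<beta>\<^sup>\<or>\<rangle> < 0\<close>; these are among the finitely many
  inversions of \<open>w\<^sup>-\<^sup>1\<close>. Since \<open>s\<^sub>i\<close> permutes the positive roots other than \<open>\<alpha>\<^sub>i\<close>,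
  the relation can be checked exponent by exponent, and for a fixed \<open>\<beta>\<close> it becomes an
  identity between the coordinates of the coroot \<open>w\<^sup>-\<^sup>1\<beta>\<^sup>\<or>\<close>, which holds because
  every coroot is either nonnegative or nonpositive. That in turn rests on the fact that
  \<open>w \<alpha>\<^sub>i\<^sup>\<or> > 0\<close> whenever \<open>l(w s\<^sub>i) \<ge> l(w)\<close>, proved by Deodhar's reduction to the
  dihedral subgroups \<open>\<langle>s\<^sub>i, s\<^sub>j\<rangle>\<close>, which for a Cartan matrix of finite type are
  finite and can be checked case by case.

  Uniqueness: writing \<open>\<lambda> = w \<omega>\<^sub>k\<close> with \<open>w\<close> of minimal length, either \<open>\<lambda> = \<omega>\<^sub>k\<close>
  or \<open>w = v s\<^sub>k\<close> with \<open>l(w) = l(v) + 1\<close>, and the relation for \<open>v, k\<close> determines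
  \<open>\<chi>\<^sub>\<lambda>\<close> from values at shorter elements, all of which are nonzero.
\<close>

section \<open>Weights, coroots and the pairing\<close>

abbreviation coord :: "'i weight \<Rightarrow> 'i \<Rightarrow> int" where
  "coord \<equiv> Poly_Mapping.lookup"

lemma coord_eqI: "(\<And>k. coord lam k = coord mu k) \<Longrightarrow> lam = mu"
  by (rule poly_mapping_eqI)

lemma coord_fw: "coord (fw i) k = (if i = k then 1 else 0)"
  unfolding fw_def by (simp add: Poly_Mapping.lookup_single when_def)

lemma coord_sr: "coord (sr C i) k = C i k"
  unfolding sr_def Poly_Mapping.lookup_sum by (simp add: Poly_Mapping.lookup_single when_def)

lemma coord_srefl: "coord (srefl C i lam) k = coord lam k - coord lam i * C i k"
  unfolding srefl_def Poly_Mapping.lookup_minus Poly_Mapping.lookup_sum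
  by (simp add: Poly_Mapping.lookup_single when_def)

lemma srefl_fw_other: "j \<noteq> k \<Longrightarrow> srefl C j (fw k) = fw k"
  by (rule coord_eqI) (simp add: coord_srefl coord_fw)

lemma wprod_Nil [simp]: "wprod C [] = id"
  by (simp add: wprod_def)

lemma wprod_Cons [simp]: "wprod C (i # is) = srefl C i \<circ> wprod C is"
  by (simp add: wprod_def)

lemma wprod_append [simp]: "wprod C (is @ js) = wprod C is \<circ> wprod C js"
  by (induction "is") auto

text \<open>
  A coroot is recorded by its coordinates \<open>h :: 'i \<Rightarrow> int\<close> in the basis of simple coroots
  \<open>\<alpha>\<^sub>k\<^sup>\<or>\<close>. As \<open>coord lam k = \<langle>lam, \<alpha>\<^sub>k\<^sup>\<or>\<rangle>\<close> and \<open>\<langle>\<alpha>\<^sub>i, \<alpha>\<^sub>l\<^sup>\<or>\<rangle> = C i l\<close>, this gives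
  the pairing and the reflection \<open>s\<^sub>i h = h - \<langle>\<alpha>\<^sub>i, h\<rangle> \<alpha>\<^sub>i\<^sup>\<or>\<close> below.
\<close>

definition simple_coroot :: "'i \<Rightarrow> 'i \<Rightarrow> int" where
  "simple_coroot i = (\<lambda>k. if k = i then 1 else 0)"

definition pairing :: "'i::finite weight \<Rightarrow> ('i \<Rightarrow> int) \<Rightarrow> int" where
  "pairing lam h = (\<Sum>k\<in>UNIV. coord lam k * h k)"

definition coroot_refl :: "('i::finite \<Rightarrow> 'i \<Rightarrow> int) \<Rightarrow> 'i \<Rightarrow> ('i \<Rightarrow> int) \<Rightarrow> 'i \<Rightarrow> int" where
  "coroot_refl C i h = (\<lambda>k. if k = i then h i - (\<Sum>l\<in>UNIV. C i l * h l) else h k)"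

definition coroot_wprod :: "('i::finite \<Rightarrow> 'i \<Rightarrow> int) \<Rightarrow> 'i list \<Rightarrow> ('i \<Rightarrow> int) \<Rightarrow> 'i \<Rightarrow> int" where
  "coroot_wprod C is = foldr (\<lambda>i f. coroot_refl C i \<circ> f) is id"

definition nonneg :: "('i \<Rightarrow> int) \<Rightarrow> bool" where
  "nonneg h \<longleftrightarrow> (\<forall>k. 0 \<le> h k)"

definition nonpos :: "('i \<Rightarrow> int) \<Rightarrow> bool" where
  "nonpos h \<longleftrightarrow> (\<forall>k. h k \<le> 0)"

lemma coroot_wprod_Nil [simp]: "coroot_wprod C [] = id"
  by (simp add: coroot_wprod_def)

lemma coroot_wprod_Cons [simp]: "coroot_wprod C (i # is) = coroot_refl C i \<circ> coroot_wprod C is"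
  by (simp add: coroot_wprod_def)

lemma coroot_wprod_append [simp]:
  "coroot_wprod C (is @ js) = coroot_wprod C is \<circ> coroot_wprod C js"
  by (induction "is") auto

lemma sum_times_simple_coroot [simp]:
  "(\<Sum>l\<in>(UNIV::'i::finite set). f l * simple_coroot i l) = (f i :: int)"
proof -
  have "(\<Sum>l\<in>UNIV. f l * simple_coroot i l) = (\<Sum>l\<in>UNIV. if l = i then f i else 0)"
    by (rule sum.cong) (auto simp: simple_coroot_def)
  then show ?thesis
    by simp
qed

lemma coroot_refl_linear:
  "coroot_refl C i (\<lambda>k. a * x k + b * y k) = (\<lambda>k. a * coroot_refl C i x k + b * coroot_refl C i y k)"
  by (auto simp: coroot_refl_def algebra_simps sum.distrib sum_distrib_left)

lemma coroot_wprod_linear: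
  "coroot_wprod C is (\<lambda>k. a * x k + b * y k)
     = (\<lambda>k. a * coroot_wprod C is x k + b * coroot_wprod C is y k)"
  by (induction "is") (auto simp: coroot_refl_linear)

lemma coroot_wprod_uminus: "coroot_wprod C is (\<lambda>k. - x k) = (\<lambda>k. - coroot_wprod C is x k)"
  using coroot_wprod_linear[of C "is" "-1" x 0 x] by simp

lemma coroot_refl_uminus: "coroot_refl C i (\<lambda>k. - x k) = (\<lambda>k. - coroot_refl C i x k)"
  using coroot_wprod_uminus[of C "[i]"] by simp

lemma pairing_fw [simp]: "pairing (fw j) h = h j"
proof -
  have "coord (fw j) k * h k = (if k = j then h j else 0)" for k
    by (auto simp: coord_fw)
  then show ?thesis
    unfolding pairing_def by simp
qed

lemma pairing_zero [simp]: "pairing 0 h = 0"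
  by (simp add: pairing_def)

lemma pairing_sr_simple_coroot: "pairing (sr C k) (simple_coroot k) = C k k"
  unfolding pairing_def by (simp add: coord_sr)

lemma pairing_scaled_simple_coroot: "pairing lam (\<lambda>m. c * simple_coroot i m) = coord lam i * c"
proof -
  have "pairing lam (\<lambda>m. c * simple_coroot i m) = (\<Sum>m\<in>UNIV. (coord lam m * c) * simple_coroot i m)"
    unfolding pairing_def by (rule sum.cong) (auto simp: algebra_simps)
  then show ?thesis
    by simp
qed

locale cartan_matrix =
  fixes C :: "'i::finite \<Rightarrow> 'i \<Rightarrow> int"
  assumes diag [simp]: "C i i = 2"
begin

lemma srefl_srefl [simp]: "srefl C i (srefl C i lam) = lam"
  by (rule coord_eqI) (simp add: coord_srefl algebra_simps)

lemma coroot_refl_coroot_refl [simp]: "coroot_refl C i (coroot_refl C i h) = h"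
proof
  fix k
  have "(\<Sum>l\<in>UNIV. C i l * coroot_refl C i h l)
      = (\<Sum>l\<in>UNIV. C i l * h l - C i l * (\<Sum>l\<in>UNIV. C i l * h l) * simple_coroot i l)"
    by (rule sum.cong) (auto simp: coroot_refl_def simple_coroot_def algebra_simps)
  also have "\<dots> = - (\<Sum>l\<in>UNIV. C i l * h l)"
    by (simp add: sum_subtractf)
  finally show "coroot_refl C i (coroot_refl C i h) k = h k"
    by (simp add: coroot_refl_def)
qed

lemma wprod_rev_wprod [simp]: "wprod C (rev is) (wprod C is lam) = lam"
  by (induction "is" arbitrary: lam) auto

lemma wprod_wprod_rev [simp]: "wprod C is (wprod C (rev is) lam) = lam"
  using wprod_rev_wprod[of "rev is"] by simp

lemma coroot_wprod_rev_coroot_wprod [simp]: "coroot_wprod C (rev is) (coroot_wprod C is h) = h"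
  by (induction "is" arbitrary: h) auto

lemma coroot_wprod_coroot_wprod_rev [simp]: "coroot_wprod C is (coroot_wprod C (rev is) h) = h"
  using coroot_wprod_rev_coroot_wprod[of "rev is"] by simp

lemma coroot_refl_simple_coroot: "coroot_refl C i (simple_coroot i) = (\<lambda>k. - simple_coroot i k)"
  unfolding coroot_refl_def sum_times_simple_coroot by (auto simp: simple_coroot_def)

lemma pairing_srefl_coroot_refl [simp]:
  "pairing (srefl C i lam) (coroot_refl C i h) = pairing lam h"
proof -
  define a where "a = (\<Sum>l\<in>UNIV. C i l * h l)"
  have h: "coroot_refl C i h = (\<lambda>k. h k - a * simple_coroot i k)"
    by (auto simp: coroot_refl_def simple_coroot_def a_def)
  have "pairing (srefl C i lam) (coroot_refl C i h)
      = (\<Sum>k\<in>UNIV. coord lam k * h k - coord lam i * (C i k * h k)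
           - a * (coord lam k * simple_coroot i k) + coord lam i * a * (C i k * simple_coroot i k))"
    unfolding pairing_def h coord_srefl by (rule sum.cong) (auto simp: algebra_simps)
  also have "\<dots> = pairing lam h - coord lam i * a - a * coord lam i + coord lam i * a * 2"
    by (simp add: sum.distrib sum_subtractf sum_distrib_left[symmetric] pairing_def a_def)
  finally show ?thesis
    by (simp add: algebra_simps)
qed

lemma pairing_wprod_coroot_wprod [simp]:
  "pairing (wprod C is lam) (coroot_wprod C is h) = pairing lam h"
  by (induction "is") auto

lemma pairing_wprod: "pairing (wprod C is lam) h = pairing lam (coroot_wprod C (rev is) h)"
  using pairing_wprod_coroot_wprod[of "is" lam "coroot_wprod C (rev is) h"] by simp

lemma pairing_wprod_fw_coroot_wprod: "pairing (wprod C is (fw k)) (coroot_wprod C is (simple_coroot k)) = 1"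
  by (simp add: simple_coroot_def)

lemma coroot_wprod_simple_coroot_ne_zero: "coroot_wprod C is (simple_coroot k) \<noteq> (\<lambda>_. 0)"
  using pairing_wprod_fw_coroot_wprod[of "is" k] by (auto simp: pairing_def)

text \<open>The contragredient action on coroots is well defined on the Weyl group,
  since it is determined by the pairing with the fundamental weights.\<close>

lemma coroot_wprod_cong:
  assumes "wprod C is = wprod C js"
  shows "coroot_wprod C is = coroot_wprod C js"
proof (intro ext)
  fix h k
  have rev: "wprod C (rev is) = wprod C (rev js)"
  proof
    fix lam
    have "wprod C (rev is) lam = wprod C (rev is) (wprod C js (wprod C (rev js) lam))"
      by simp
    then show "wprod C (rev is) lam = wprod C (rev js) lam"
      by (simp add: assms[symmetric])
  qed
  have "coroot_wprod C is h k = pairing (wprod C (rev is) (fw k)) h"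
    using pairing_wprod[of "rev is" "fw k" h] by simp
  also have "\<dots> = coroot_wprod C js h k"
    using pairing_wprod[of "rev js" "fw k" h] by (simp add: rev)
  finally show "coroot_wprod C is h k = coroot_wprod C js h k" .
qed

definition coroot_act :: "('i weight \<Rightarrow> 'i weight) \<Rightarrow> ('i \<Rightarrow> int) \<Rightarrow> 'i \<Rightarrow> int" where
  "coroot_act w = coroot_wprod C (SOME is. wprod C is = w)"

lemma coroot_act_wprod [simp]: "coroot_act (wprod C is) = coroot_wprod C is"
  unfolding coroot_act_def
  by (rule coroot_wprod_cong) (rule someI[of "\<lambda>js. wprod C js = wprod C is"], rule refl)

end

section \<open>Words and length in the Weyl group\<close>

lemma weyl_wprod [simp, intro]: "wprod C is \<in> weyl C"
  by (simp add: weyl_def)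

lemma weylE:
  assumes "w \<in> weyl C"
  obtains "is" where "w = wprod C is"
  using assms by (auto simp: weyl_def)

lemma weyl_comp [simp, intro]: "v \<in> weyl C \<Longrightarrow> u \<in> weyl C \<Longrightarrow> v \<circ> u \<in> weyl C"
  by (auto elim!: weylE simp flip: wprod_append)

lemma srefl_in_weyl [simp, intro]: "srefl C i \<in> weyl C"
  using weyl_wprod[of C "[i]"] by simp

lemma wlen_wprod_le: "wlen C (wprod C is) \<le> length is"
  unfolding wlen_def by (rule Least_le) auto

lemma reduced_wordE:
  assumes "w \<in> weyl C"
  obtains "is" where "length is = wlen C w" "wprod C is = w"
proof -
  from assms obtain js where "w = wprod C js"
    by (rule weylE)
  then have "\<exists>k is. length is = k \<and> wprod C is = w"
    by auto
  then have "\<exists>is. length is = wlen C w \<and> wprod C is = w"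
    unfolding wlen_def by (rule LeastI_ex)
  then show ?thesis
    using that by blast
qed

lemma wlen_comp_srefl_le:
  assumes "w \<in> weyl C"
  shows "wlen C (w \<circ> srefl C i) \<le> wlen C w + 1"
proof -
  obtain ws where "length ws = wlen C w" "wprod C ws = w"
    using assms by (rule reduced_wordE)
  then show ?thesis
    using wlen_wprod_le[of C "ws @ [i]"] by simp
qed

lemma wlen_eq_0_iff:
  assumes "w \<in> weyl C"
  shows "wlen C w = 0 \<longleftrightarrow> w = id"
proof
  show "wlen C w = 0 \<Longrightarrow> w = id"
    using assms by (metis reduced_wordE length_0_conv wprod_Nil)
  show "w = id \<Longrightarrow> wlen C w = 0"
    using wlen_wprod_le[of C "[]"] by simp
qed

context cartan_matrix
begin

lemma coroot_act_comp: "v \<in> weyl C \<Longrightarrow> u \<in> weyl C \<Longrightarrow> coroot_act (v \<circ> u) = coroot_act v \<circ> coroot_act u"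
  by (auto elim!: weylE simp flip: wprod_append)

lemma coroot_act_id [simp]: "coroot_act id = id"
  using coroot_act_wprod[of "[]"] by simp

end

section \<open>Rank two subsystems\<close>

lemma cartan_simple_diag: "cartan_simple C \<Longrightarrow> C i i = 2"
  unfolding cartan_simple_def by (elim conjE) simp

lemma cartan_simple_offdiag:
  assumes "cartan_simple C" "i \<noteq> j"
  shows "C i j \<le> 0" "C i j = 0 \<longleftrightarrow> C j i = 0"
  using assms unfolding cartan_simple_def by (elim conjE; simp)+

lemma symmetrized_form_rank2:
  fixes C :: "'a::finite \<Rightarrow> 'a \<Rightarrow> int" and e :: "'a \<Rightarrow> real"
  assumes ij: "i \<noteq> j" and d: "C i i = 2" "C j j = 2"
    and c': "of_int (C j i) * e i = of_int (C i j) * e j"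
    and x_def: "x = (\<lambda>k. if k = i then - (of_int (C i j) * e j) else if k = j then 2 * e i else 0)"
  shows "(\<Sum>a\<in>UNIV. \<Sum>b\<in>UNIV. x a * of_int (C a b) * e b * x b)
       = 2 * e i * e i * e j * (4 - of_int (C i j * C j i))"
proof -
  define c where "c = of_int (C i j) * e j"
  have supp: "(\<Sum>a\<in>UNIV. f a) = f i + f j" if "\<And>a. a \<noteq> i \<Longrightarrow> a \<noteq> j \<Longrightarrow> f a = 0"
    for f :: "'a \<Rightarrow> real"
  proof -
    have "(\<Sum>a\<in>UNIV. f a) = (\<Sum>a\<in>{i, j}. f a)"
      by (rule sum.mono_neutral_right) (auto simp: that)
    then show ?thesis
      using ij by simp
  qed
  have inner: "(\<Sum>b\<in>UNIV. x a * of_int (C a b) * e b * x b)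
      = x a * of_int (C a i) * e i * x i + x a * of_int (C a j) * e j * x j" for a
    by (rule supp) (auto simp: x_def)
  have xi: "x i = - c" and xj: "x j = 2 * e i"
    using ij by (auto simp: x_def c_def)
  have t2: "x i * of_int (C i j) * e j * x j = - 2 * e i * (c * c)"
    unfolding xi xj by (simp add: c_def algebra_simps)
  have "x j * of_int (C j i) * e i * x i = x j * (of_int (C j i) * e i) * x i"
    by (simp add: algebra_simps)
  then have t3: "x j * of_int (C j i) * e i * x i = - 2 * e i * (c * c)"
    unfolding c' xi xj by (simp add: c_def algebra_simps)
  have "c * c = of_int (C i j * C j i) * e i * e j"
    using c' by (simp add: c_def algebra_simps)
  moreover have "(\<Sum>a\<in>UNIV. \<Sum>b\<in>UNIV. x a * of_int (C a b) * e b * x b)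
      = (x i * of_int (C i i) * e i * x i + x i * of_int (C i j) * e j * x j)
        + (x j * of_int (C j i) * e i * x i + x j * of_int (C j j) * e j * x j)"
    unfolding inner by (rule supp) (auto simp: x_def)
  moreover have "\<dots> = 8 * e i * e i * e j - 2 * e i * (c * c)"
    unfolding t2 t3 unfolding xi xj d by (simp add: algebra_simps)
  ultimately show ?thesis
    by (simp add: algebra_simps)
qed

lemma cartan_simple_rank2_product_lt4:
  assumes cs: "cartan_simple C" and ij: "i \<noteq> j"
  shows "C i j * C j i < 4"
proof -
  obtain e :: "'a \<Rightarrow> real" where epos: "\<forall>i. e i > 0"
    and esym: "\<forall>i j. of_int (C i j) * e j = of_int (C j i) * e i"
    and pd: "\<forall>x::'a \<Rightarrow> real. (\<exists>i. x i \<noteq> 0) \<longrightarrow>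
               (\<Sum>i\<in>UNIV. \<Sum>j\<in>UNIV. x i * of_int (C i j) * e j * x j) > 0"
    using cs unfolding cartan_simple_def by (elim conjE exE) (rule that; assumption)
  define x where "x = (\<lambda>k. if k = i then - (of_int (C i j) * e j) else if k = j then 2 * e i else 0)"
  have "x j \<noteq> 0"
    using epos[rule_format, of i] ij by (auto simp: x_def)
  then have "(\<Sum>a\<in>UNIV. \<Sum>b\<in>UNIV. x a * of_int (C a b) * e b * x b) > 0"
    using pd by blast
  moreover have "of_int (C j i) * e i = of_int (C i j) * e j"
    using esym by simp
  ultimately have "2 * e i * e i * e j * (4 - of_int (C i j * C j i)) > 0"
    using symmetrized_form_rank2[OF ij cartan_simple_diag[OF cs] cartan_simple_diag[OF cs] _ x_def]
    by simp
  moreover have "2 * e i * e i * e j > 0"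
    using epos by simp
  ultimately have "4 - of_int (C i j * C j i) > (0::real)"
    by (metis zero_less_mult_pos)
  then show ?thesis
    by linarith
qed

lemma cartan_simple_rank2_cases:
  assumes cs: "cartan_simple C" and ij: "i \<noteq> j"
  shows "(C i j = 0 \<and> C j i = 0) \<or> (C i j = -1 \<and> C j i = -1)
    \<or> (C i j = -1 \<and> C j i = -2) \<or> (C i j = -2 \<and> C j i = -1)
    \<or> (C i j = -1 \<and> C j i = -3) \<or> (C i j = -3 \<and> C j i = -1)"
proof -
  have a: "C i j \<le> 0" "C j i \<le> 0" "C i j = 0 \<longleftrightarrow> C j i = 0"
    using cartan_simple_offdiag[OF cs] ij by auto
  have p: "C i j * C j i < 4"
    by (rule cartan_simple_rank2_product_lt4[OF cs ij])
  show ?thesis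
  proof (cases "C i j = 0")
    case False
    then have n: "- C i j \<ge> 1" "- C j i \<ge> 1"
      using a by auto
    have "- C i j * 1 \<le> - C i j * - C j i" "- C j i * 1 \<le> - C j i * - C i j"
      using n by (intro mult_left_mono; simp)+
    then have "- C i j < 4" "- C j i < 4"
      using p by (simp_all add: mult.commute)
    then have "C i j = -3 \<or> C i j = -2 \<or> C i j = -1" "C j i = -3 \<or> C j i = -2 \<or> C j i = -1"
      using n by auto
    then show ?thesis
      using p by (elim disjE) simp_all
  qed (use a in simp)
qed

fun alt_word :: "'i \<Rightarrow> 'i \<Rightarrow> nat \<Rightarrow> 'i list" where
  "alt_word a b 0 = []"
| "alt_word a b (Suc k) = alt_word b a k @ [a]"

lemma alt_word_add:
  "alt_word a b (n + k) = (if even k then alt_word a b n else alt_word b a n) @ alt_word a b k"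
  by (induction k arbitrary: a b) auto

lemma length_alt_word [simp]: "length (alt_word a b k) = k"
  by (induction k arbitrary: a b) auto

lemma set_alt_word: "set (alt_word a b k) \<subseteq> {a, b}"
  by (induction k arbitrary: a b) auto

lemma alt_wordI:
  assumes "set rs \<subseteq> {a, b}" "successively (\<noteq>) rs" "rs \<noteq> [] \<Longrightarrow> last rs = a"
  shows "rs = alt_word a b (length rs)"
  using assms
proof (induction rs arbitrary: a b rule: rev_induct)
  case (snoc x xs)
  show ?case
  proof (cases xs rule: rev_cases)
    case (snoc ys y)
    with snoc.prems have "successively (\<noteq>) xs" "y \<noteq> x" "y \<in> {a, b}" "x = a"
      by (auto simp: successively_append_iff)
    with snoc.prems \<open>xs = ys @ [y]\<close> have "xs = alt_word b a (length xs)"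
      by (intro snoc.IH) auto
    with \<open>x = a\<close> show ?thesis
      by simp
  qed (use snoc.prems in simp)
qed simp

lemma not_successively_neqE:
  assumes "\<not> successively (\<noteq>) rs"
  obtains p x q where "rs = p @ x # x # q"
  using assms
proof (induction rs arbitrary: thesis rule: induct_list012)
  case (3 x y zs)
  show ?case
  proof (cases "x = y")
    case True
    then show ?thesis
      using "3.prems"(1)[of "[]"] by simp
  next
    case False
    then show ?thesis
      using "3.prems" by (auto intro: "3.IH"(2)[of thesis] simp: append_Cons[symmetric] simp del: append_Cons)
  qed
qed simp_all

text \<open>The order \<open>m\<^sub>i\<^sub>j\<close> of \<open>s\<^sub>i s\<^sub>j\<close>, as a function of \<open>C i j * C j i \<in> {0, 1, 2, 3}\<close>.\<close>

definition coxeter_order :: "int \<Rightarrow> nat" where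
  "coxeter_order n = (if n = 0 then 2 else if n = 1 then 3 else if n = 2 then 4 else 6)"

definition coroot_comb :: "'i \<Rightarrow> 'i \<Rightarrow> int \<Rightarrow> int \<Rightarrow> 'i \<Rightarrow> int" where
  "coroot_comb i j a b = (\<lambda>l. a * simple_coroot i l + b * simple_coroot j l)"

definition nonneg_comb :: "'i \<Rightarrow> 'i \<Rightarrow> ('i \<Rightarrow> int) \<Rightarrow> bool" where
  "nonneg_comb i j h \<longleftrightarrow> (\<exists>a b. 0 \<le> a \<and> 0 \<le> b \<and> h = coroot_comb i j a b)"

lemma sum_times_coroot_comb:
  fixes C :: "'i::finite \<Rightarrow> 'i \<Rightarrow> int"
  assumes "i \<noteq> j"
  shows "(\<Sum>l\<in>UNIV. C k l * coroot_comb i j a b l) = a * C k i + b * C k j"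
proof -
  have "(\<Sum>l\<in>UNIV. C k l * coroot_comb i j a b l)
      = (\<Sum>l\<in>UNIV. (a * C k l) * simple_coroot i l + (b * C k l) * simple_coroot j l)"
    by (rule sum.cong) (auto simp: coroot_comb_def algebra_simps)
  then show ?thesis
    by (simp only: sum.distrib sum_times_simple_coroot)
qed

lemma coroot_refl_comb:
  fixes C :: "'i::finite \<Rightarrow> 'i \<Rightarrow> int"
  assumes "i \<noteq> j" "C i i = 2" "C j j = 2"
  shows "coroot_refl C i (coroot_comb i j a b) = coroot_comb i j (- a - C i j * b) b"
    and "coroot_refl C j (coroot_comb i j a b) = coroot_comb i j a (- b - C j i * a)"
  unfolding coroot_refl_def sum_times_coroot_comb[OF assms(1)]
  using assms by (auto simp: coroot_comb_def simple_coroot_def algebra_simps)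

locale finite_cartan =
  fixes C :: "'i::{finite,linorder} \<Rightarrow> 'i \<Rightarrow> int"
  assumes cartan_simple: "cartan_simple C"

sublocale finite_cartan \<subseteq> cartan_matrix
  by unfold_locales (rule cartan_simple_diag[OF cartan_simple])

context finite_cartan
begin

lemma braid_relation:
  assumes "i \<noteq> j"
  shows "wprod C (alt_word i j (coxeter_order (C i j * C j i)))
       = wprod C (alt_word j i (coxeter_order (C i j * C j i)))"
proof (rule ext, rule coord_eqI)
  fix lam k
  show "coord (wprod C (alt_word i j (coxeter_order (C i j * C j i))) lam) k
      = coord (wprod C (alt_word j i (coxeter_order (C i j * C j i))) lam) k"
    using cartan_simple_rank2_cases[OF cartan_simple assms]
    by (elim disjE conjE) (simp_all add: coxeter_order_def numeral_eq_Suc coord_srefl algebra_simps)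
qed

lemma nonneg_combI: "0 \<le> a \<Longrightarrow> 0 \<le> b \<Longrightarrow> nonneg_comb i j (coroot_comb i j a b)"
  unfolding nonneg_comb_def by blast

lemma dihedral_coroot_nonneg:
  assumes ij: "i \<noteq> j" and k: "k < coxeter_order (C i j * C j i)"
  shows "nonneg_comb i j (coroot_wprod C (alt_word j i k) (simple_coroot i))"
proof -
  have "simple_coroot i = coroot_comb i j 1 0"
    by (simp add: coroot_comb_def)
  then show ?thesis
    using cartan_simple_rank2_cases[OF cartan_simple ij] k
    by (elim disjE conjE; simp add: coxeter_order_def numeral_eq_Suc less_Suc_eq; elim disjE;
        simp add: coroot_refl_comb[OF ij] nonneg_combI)
qed

end

section \<open>Positivity of \<open>w \<alpha>\<^sub>i\<^sup>\<or>\<close>\<close>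

definition dihedral_len :: "('i::finite \<Rightarrow> 'i \<Rightarrow> int) \<Rightarrow> 'i \<Rightarrow> 'i \<Rightarrow> ('i weight \<Rightarrow> 'i weight) \<Rightarrow> nat" where
  "dihedral_len C i j u = (LEAST k. \<exists>vs. set vs \<subseteq> {i, j} \<and> length vs = k \<and> wprod C vs = u)"

lemma dihedral_len_le: "set vs \<subseteq> {i, j} \<Longrightarrow> dihedral_len C i j (wprod C vs) \<le> length vs"
  unfolding dihedral_len_def by (rule Least_le) auto

lemma dihedral_reduced_wordE:
  assumes "set vs \<subseteq> {i, j}"
  obtains rs where "set rs \<subseteq> {i, j}" "length rs = dihedral_len C i j (wprod C vs)"
    "wprod C rs = wprod C vs"
proof -
  have "\<exists>k rs. set rs \<subseteq> {i, j} \<and> length rs = k \<and> wprod C rs = wprod C vs"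
    using assms by blast
  then have "\<exists>rs. set rs \<subseteq> {i, j} \<and> length rs = dihedral_len C i j (wprod C vs) \<and> wprod C rs = wprod C vs"
    unfolding dihedral_len_def by (rule LeastI_ex)
  then show ?thesis
    using that by blast
qed

lemma wlen_comp_dihedral_le:
  assumes "v \<in> weyl C" "set vs \<subseteq> {i, j}"
  shows "wlen C (v \<circ> wprod C vs) \<le> wlen C v + dihedral_len C i j (wprod C vs)"
proof -
  obtain ws where ws: "length ws = wlen C v" "wprod C ws = v"
    using assms(1) by (rule reduced_wordE)
  obtain rs where rs: "set rs \<subseteq> {i, j}" "length rs = dihedral_len C i j (wprod C vs)"
    "wprod C rs = wprod C vs"
    using assms(2) by (rule dihedral_reduced_wordE)
  show ?thesis
    using wlen_wprod_le[of C "ws @ rs"] ws rs by simp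
qed

lemma dihedral_len_le_comp_srefl:
  assumes v: "v \<in> weyl C" "set vs \<subseteq> {i, j}" "v \<circ> wprod C vs = w"
    "wlen C v + dihedral_len C i j (wprod C vs) \<le> wlen C w"
    and w: "wlen C w \<le> wlen C (w \<circ> srefl C i)"
  shows "dihedral_len C i j (wprod C vs) \<le> dihedral_len C i j (wprod C vs \<circ> srefl C i)"
proof -
  have "w \<circ> srefl C i = v \<circ> wprod C (vs @ [i])"
    using v(3) by (auto simp: fun_eq_iff)
  then have "wlen C (w \<circ> srefl C i) \<le> wlen C v + dihedral_len C i j (wprod C vs \<circ> srefl C i)"
    using wlen_comp_dihedral_le[OF v(1), of "vs @ [i]" i j] v(2) by simp
  then show ?thesis
    using w v(4) by linarith
qed

context cartan_matrix
begin

lemma wprod_cancel_double: "wprod C (p @ x # x # q) = wprod C (p @ q)"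
  by (auto simp: fun_eq_iff)

lemma wprod_snoc_comp_srefl: "wprod C (rs @ [i]) \<circ> srefl C i = wprod C rs"
  by (auto simp: fun_eq_iff)

lemma dihedral_len_Cons_le:
  assumes "set vs \<subseteq> {i, j}" "k \<in> {i, j}"
  shows "dihedral_len C i j (wprod C (k # vs)) \<le> dihedral_len C i j (wprod C vs) + 1"
proof -
  obtain rs where rs: "set rs \<subseteq> {i, j}" "length rs = dihedral_len C i j (wprod C vs)"
    "wprod C rs = wprod C vs"
    using assms(1) by (rule dihedral_reduced_wordE)
  then have "wprod C (k # vs) = wprod C (k # rs)" "set (k # rs) \<subseteq> {i, j}"
    using assms(2) by auto
  then show ?thesis
    using dihedral_len_le[of "k # rs" i j C] rs(2) by simp
qed

lemma dihedral_reduced_word_alt: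
  assumes rs: "set rs \<subseteq> {i, j}" "length rs = dihedral_len C i j (wprod C rs)"
    and len: "dihedral_len C i j (wprod C rs) \<le> dihedral_len C i j (wprod C rs \<circ> srefl C i)"
  shows "rs = alt_word j i (length rs)"
proof (rule alt_wordI)
  show "set rs \<subseteq> {j, i}"
    using rs(1) by auto
  show "successively (\<noteq>) rs"
  proof (rule ccontr)
    assume "\<not> successively (\<noteq>) rs"
    then obtain p x q where rsd: "rs = p @ x # x # q"
      by (rule not_successively_neqE)
    then have "dihedral_len C i j (wprod C rs) \<le> length (p @ q)"
      using dihedral_len_le[of "p @ q" i j C] rs(1) by (simp only: wprod_cancel_double) auto
    then show False
      using rs(2) rsd by simp
  qed
  show "last rs = j" if ne: "rs \<noteq> []"
  proof (rule ccontr)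
    assume "last rs \<noteq> j"
    then have "rs = butlast rs @ [i]"
      using rs(1) last_in_set[OF ne] ne by (metis append_butlast_last_id insertE singletonD subsetD)
    then have "wprod C rs \<circ> srefl C i = wprod C (butlast rs)"
      by (metis wprod_snoc_comp_srefl)
    moreover have "set (butlast rs) \<subseteq> {i, j}"
      using rs(1) by (meson in_set_butlastD subset_iff)
    ultimately have "dihedral_len C i j (wprod C rs \<circ> srefl C i) \<le> length rs - 1"
      using dihedral_len_le[of "butlast rs" i j C] by simp
    then show False
      using rs(2) len ne by (cases "length rs") auto
  qed
qed

lemma minimal_dihedral_factorization:
  assumes "v0 \<in> weyl C" "set vs0 \<subseteq> {i, j}" "v0 \<circ> wprod C vs0 = w"
    "wlen C v0 + dihedral_len C i j (wprod C vs0) \<le> wlen C w"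
  obtains v vs where "v \<in> weyl C" "set vs \<subseteq> {i, j}" "v \<circ> wprod C vs = w"
    "wlen C v + dihedral_len C i j (wprod C vs) \<le> wlen C w" "wlen C v \<le> wlen C v0"
    "\<And>k. k \<in> {i, j} \<Longrightarrow> wlen C v \<le> wlen C (v \<circ> srefl C k)"
proof -
  define A where "A = {v \<in> weyl C. \<exists>vs. set vs \<subseteq> {i, j} \<and> v \<circ> wprod C vs = w
    \<and> wlen C v + dihedral_len C i j (wprod C vs) \<le> wlen C w}"
  have "v0 \<in> A"
    using assms unfolding A_def by blast
  then obtain v where "v \<in> A" and min: "\<And>v'. v' \<in> A \<Longrightarrow> wlen C v \<le> wlen C v'"
    using ex_has_least_nat[of "\<lambda>v. v \<in> A" v0 "wlen C"] by blast
  then obtain vs where v: "v \<in> weyl C" "set vs \<subseteq> {i, j}" "v \<circ> wprod C vs = w"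
    "wlen C v + dihedral_len C i j (wprod C vs) \<le> wlen C w"
    unfolding A_def by blast
  have "wlen C v \<le> wlen C (v \<circ> srefl C k)" if k: "k \<in> {i, j}" for k
  proof (rule ccontr)
    assume lt: "\<not> wlen C v \<le> wlen C (v \<circ> srefl C k)"
    have "v \<circ> srefl C k \<circ> wprod C (k # vs) = w"
      using v(3) by (auto simp: fun_eq_iff)
    moreover have "wlen C (v \<circ> srefl C k) + dihedral_len C i j (wprod C (k # vs)) \<le> wlen C w"
      using dihedral_len_Cons_le[OF v(2) k] lt v(4) by linarith
    ultimately have "v \<circ> srefl C k \<in> A"
      using v(1,2) k unfolding A_def by (intro CollectI conjI exI[of _ "k # vs"]) auto
    then show False
      using min lt by fastforce
  qed
  then show ?thesis
    using that v min[OF \<open>v0 \<in> A\<close>] by blast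
qed

end

context finite_cartan
begin

lemma dihedral_coroot_nonneg_if_len_le:
  assumes ij: "i \<noteq> j" and vs: "set vs \<subseteq> {i, j}"
    and len: "dihedral_len C i j (wprod C vs) \<le> dihedral_len C i j (wprod C vs \<circ> srefl C i)"
  shows "nonneg_comb i j (coroot_wprod C vs (simple_coroot i))"
proof -
  define m where "m = coxeter_order (C i j * C j i)"
  obtain rs where rs: "set rs \<subseteq> {i, j}" "length rs = dihedral_len C i j (wprod C vs)"
    "wprod C rs = wprod C vs"
    using vs by (rule dihedral_reduced_wordE)
  have alt: "rs = alt_word j i (length rs)"
    using dihedral_reduced_word_alt[of rs i j] rs len by simp
  have "length rs < m"
  proof (rule ccontr)
    assume "\<not> length rs < m"
    then obtain n where n: "length rs = n + m"
      by (metis add.commute le_add_diff_inverse not_less)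
    obtain m' where m': "m = Suc m'"
      by (cases m) (auto simp: m_def coxeter_order_def split: if_splits)
    define pre where "pre = (if even m then alt_word j i n else alt_word i j n)"
    have "wprod C vs = wprod C (pre @ alt_word j i m)"
      using rs(3) alt n alt_word_add[of j i n m] by (simp add: pre_def)
    also have "\<dots> = wprod C (pre @ alt_word j i m' @ [i])"
      using braid_relation[OF ij] m' by (simp add: m_def)
    finally have "wprod C vs \<circ> srefl C i = wprod C (pre @ alt_word j i m')"
      using wprod_snoc_comp_srefl[of "pre @ alt_word j i m'" i] by simp
    moreover have "set (pre @ alt_word j i m') \<subseteq> {i, j}"
      using set_alt_word[of j i] set_alt_word[of i j] by (auto simp: pre_def)
    ultimately have "dihedral_len C i j (wprod C vs \<circ> srefl C i) \<le> length (pre @ alt_word j i m')"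
      by (metis dihedral_len_le)
    moreover have "length (pre @ alt_word j i m') = n + m'"
      by (simp add: pre_def)
    ultimately show False
      using len rs(2) n m' by simp
  qed
  then show ?thesis
    using dihedral_coroot_nonneg[OF ij] alt coroot_wprod_cong[OF rs(3)] by (metis m_def)
qed

text \<open>Deodhar's argument: factor \<open>w = v u\<close> with \<open>u \<in> \<langle>s\<^sub>i, s\<^sub>j\<rangle>\<close>, where \<open>s\<^sub>j\<close> is the last
  letter of a reduced word, and \<open>v\<close> shortest possible; then induction applies to \<open>v\<close>,
  and \<open>u \<alpha>\<^sub>i\<^sup>\<or>\<close> is a nonnegative combination of \<open>\<alpha>\<^sub>i\<^sup>\<or>, \<alpha>\<^sub>j\<^sup>\<or>\<close> by the rank two check.\<close>

lemma coroot_act_simple_coroot_nonneg: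
  assumes "w \<in> weyl C" "wlen C w \<le> wlen C (w \<circ> srefl C i)"
  shows "nonneg (coroot_act w (simple_coroot i))"
  using assms
proof (induction "wlen C w" arbitrary: w i rule: less_induct)
  case less
  show ?case
  proof (cases "wlen C w = 0")
    case True
    then show ?thesis
      using less.prems(1) by (simp add: wlen_eq_0_iff nonneg_def simple_coroot_def)
  next
    case False
    obtain ws where ws: "length ws = wlen C w" "wprod C ws = w"
      using less.prems(1) by (rule reduced_wordE)
    with False obtain ws' j where wsd: "ws = ws' @ [j]"
      by (metis append_butlast_last_id length_0_conv)
    have ws': "wlen C (wprod C ws') < wlen C w"
      using wlen_wprod_le[of C ws'] ws(1) wsd by simp
    have "wprod C ws' \<circ> srefl C j = w"
      using ws(2) wsd by simp
    have ij: "i \<noteq> j"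
      using less.prems(2) ws' wprod_snoc_comp_srefl[of ws' j] ws(2) wsd by auto
    have start: "wlen C (wprod C ws') + dihedral_len C i j (wprod C [j]) \<le> wlen C w"
      using dihedral_len_le[of "[j]" i j C] ws' by simp
    obtain v vs where v: "v \<in> weyl C" "set vs \<subseteq> {i, j}" "v \<circ> wprod C vs = w"
      "wlen C v + dihedral_len C i j (wprod C vs) \<le> wlen C w" "wlen C v \<le> wlen C (wprod C ws')"
      and v_min: "\<And>k. k \<in> {i, j} \<Longrightarrow> wlen C v \<le> wlen C (v \<circ> srefl C k)"
      by (rule minimal_dihedral_factorization[of "wprod C ws'" "[j]" i j w])
        (use start \<open>wprod C ws' \<circ> srefl C j = w\<close> in auto)
    have "wlen C v < wlen C w"
      using v(5) ws' by simp
    obtain a b where ab: "0 \<le> a" "0 \<le> b"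
      "coroot_wprod C vs (simple_coroot i) = coroot_comb i j a b"
      using dihedral_coroot_nonneg_if_len_le[OF ij v(2) dihedral_len_le_comp_srefl[OF v(1-4) less.prems(2)]]
      unfolding nonneg_comb_def by blast
    have "nonneg (coroot_act v (simple_coroot k))" if "k \<in> {i, j}" for k
      using less.hyps[OF \<open>wlen C v < wlen C w\<close> v(1) v_min[OF that]] .
    moreover obtain us where "v = wprod C us"
      using v(1) by (rule weylE)
    moreover have "coroot_act w (simple_coroot i) = coroot_act v (coroot_wprod C vs (simple_coroot i))"
      using coroot_act_comp[OF v(1) weyl_wprod[of C vs]] v(3) by simp
    ultimately show ?thesis
      using ab by (simp add: coroot_comb_def coroot_wprod_linear nonneg_def)
  qed
qed

end

section \<open>Positive and negative coroots\<close>

context finite_cartan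
begin

lemma coroot_nonneg_or_nonpos:
  "nonneg (coroot_wprod C ws (simple_coroot i)) \<or> nonpos (coroot_wprod C ws (simple_coroot i))"
proof (cases "wlen C (wprod C ws) \<le> wlen C (wprod C ws \<circ> srefl C i)")
  case True
  then show ?thesis
    using coroot_act_simple_coroot_nonneg[of "wprod C ws" i] by simp
next
  case False
  have "wlen C (wprod C (ws @ [i])) \<le> wlen C (wprod C (ws @ [i]) \<circ> srefl C i)"
    using False unfolding wprod_snoc_comp_srefl by simp
  then have "nonneg (coroot_wprod C (ws @ [i]) (simple_coroot i))"
    using coroot_act_simple_coroot_nonneg[OF weyl_wprod] by (metis coroot_act_wprod)
  then show ?thesis
    by (simp add: coroot_refl_simple_coroot coroot_wprod_uminus nonneg_def nonpos_def)
qed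

text \<open>\<open>s\<^sub>i\<close> permutes the positive coroots other than \<open>\<alpha>\<^sub>i\<^sup>\<or>\<close>: such a coroot is not a
  multiple of \<open>\<alpha>\<^sub>i\<^sup>\<or>\<close> (its pairing with a weight is \<open>1\<close>), so it keeps a positive
  coordinate away from \<open>i\<close>, which \<open>s\<^sub>i\<close> does not change.\<close>

lemma coroot_refl_nonneg:
  assumes nn: "nonneg (coroot_wprod C ws (simple_coroot k))"
    and ne: "coroot_wprod C ws (simple_coroot k) \<noteq> simple_coroot i"
  shows "nonneg (coroot_refl C i (coroot_wprod C ws (simple_coroot k)))"
proof -
  define h where "h = coroot_wprod C ws (simple_coroot k)"
  have h_nonneg: "0 \<le> h m" for m
    using nn by (simp add: h_def nonneg_def)
  have "\<exists>m. m \<noteq> i \<and> h m \<noteq> 0"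
  proof (rule ccontr)
    assume "\<nexists>m. m \<noteq> i \<and> h m \<noteq> 0"
    then have hi: "h = (\<lambda>m. h i * simple_coroot i m)"
      by (intro ext) (auto simp: simple_coroot_def)
    have "pairing (wprod C ws (fw k)) h = 1"
      unfolding h_def by (rule pairing_wprod_fw_coroot_wprod)
    then have "coord (wprod C ws (fw k)) i * h i = 1"
      by (subst (asm) hi) (simp only: pairing_scaled_simple_coroot)
    then have "h i = 1"
      using h_nonneg[of i] zmult_eq_1_iff by auto
    then show False
      using hi ne by (simp add: h_def)
  qed
  then obtain m where m: "m \<noteq> i" "h m \<noteq> 0"
    by blast
  with h_nonneg[of m] have "0 < h m"
    by simp
  then have "0 < coroot_wprod C (i # ws) (simple_coroot k) m"
    using m(1) by (simp add: coroot_refl_def h_def)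
  then have "\<not> nonpos (coroot_wprod C (i # ws) (simple_coroot k))"
    unfolding nonpos_def by (metis not_le)
  then show ?thesis
    using coroot_nonneg_or_nonpos[of "i # ws" k] by simp
qed

subsection \<open>Roots are determined by their coroots\<close>

definition sym_factor :: "'i \<Rightarrow> real" where
  "sym_factor = (SOME e. (\<forall>i. e i > 0) \<and> (\<forall>i j. of_int (C i j) * e j = of_int (C j i) * e i))"

lemma sym_factor_pos: "sym_factor i > 0"
  and sym_factor_sym: "of_int (C i j) * sym_factor j = of_int (C j i) * sym_factor i"
proof -
  have "\<exists>e::'i \<Rightarrow> real. (\<forall>i. e i > 0) \<and> (\<forall>i j. of_int (C i j) * e j = of_int (C j i) * e i)"
    using cartan_simple unfolding cartan_simple_def by (elim conjE exE) (intro exI conjI; assumption)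
  from someI_ex[OF this] show "sym_factor i > 0" "of_int (C i j) * sym_factor j = of_int (C j i) * sym_factor i"
    unfolding sym_factor_def[symmetric] by blast+
qed

definition real_coords :: "'i weight \<Rightarrow> 'i \<Rightarrow> real" where
  "real_coords lam = (\<lambda>t. of_int (coord lam t))"

definition real_refl :: "'i \<Rightarrow> ('i \<Rightarrow> real) \<Rightarrow> 'i \<Rightarrow> real" where
  "real_refl i x = (\<lambda>t. x t - x i * of_int (C i t))"

text \<open>The identification of coroots with (real) weights given by the symmetrization:
  \<open>\<alpha>\<^sub>k\<^sup>\<or> \<mapsto> \<alpha>\<^sub>k / e\<^sub>k\<close>.\<close>

definition coroot_to_weight :: "('i \<Rightarrow> int) \<Rightarrow> 'i \<Rightarrow> real" where
  "coroot_to_weight h = (\<lambda>t. \<Sum>k\<in>UNIV. of_int (h k) * (of_int (C k t) / sym_factor k))"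

lemma real_coords_srefl: "real_coords (srefl C i lam) = real_refl i (real_coords lam)"
  by (auto simp: real_coords_def real_refl_def coord_srefl)

lemma real_refl_scale: "real_refl i (\<lambda>t. x t / c) = (\<lambda>t. real_refl i x t / c)"
  by (auto simp: real_refl_def diff_divide_distrib)

lemma coroot_to_weight_coroot_refl:
  "coroot_to_weight (coroot_refl C i h) = real_refl i (coroot_to_weight h)"
proof
  fix t
  define a where "a = (\<Sum>l\<in>UNIV. C i l * h l)"
  have h: "coroot_refl C i h = (\<lambda>k. h k - a * simple_coroot i k)"
    by (auto simp: coroot_refl_def simple_coroot_def a_def)
  have "coroot_to_weight h i = (\<Sum>k\<in>UNIV. of_int (h k) * (of_int (C i k) / sym_factor i))"
  proof -
    have "of_int (C k i) / sym_factor k = of_int (C i k) / sym_factor i" for k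
      using sym_factor_sym[of i k] sym_factor_pos[of i] sym_factor_pos[of k]
      by (simp add: field_simps)
    then show ?thesis
      unfolding coroot_to_weight_def by simp
  qed
  also have "\<dots> = of_int a / sym_factor i"
    by (simp add: a_def sum_divide_distrib algebra_simps)
  finally have hi: "coroot_to_weight h i = of_int a / sym_factor i" .
  have "coroot_to_weight (coroot_refl C i h) t
      = (\<Sum>k\<in>UNIV. of_int (h k) * (of_int (C k t) / sym_factor k)
          - (of_int a * (of_int (C k t) / sym_factor k)) * of_int (simple_coroot i k))"
    unfolding coroot_to_weight_def h by (rule sum.cong) (auto simp: algebra_simps)
  also have "\<dots> = coroot_to_weight h t - of_int a * (of_int (C i t) / sym_factor i)"
  proof -
    have "(\<Sum>k\<in>UNIV. (of_int a * (of_int (C k t) / sym_factor k)) * (of_int (simple_coroot i k) :: real))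
        = (\<Sum>k\<in>UNIV. if k = i then of_int a * (of_int (C i t) / sym_factor i) else 0)"
      by (rule sum.cong) (auto simp: simple_coroot_def)
    then show ?thesis
      by (simp add: sum_subtractf coroot_to_weight_def)
  qed
  finally show "coroot_to_weight (coroot_refl C i h) t = real_refl i (coroot_to_weight h) t"
    by (simp add: real_refl_def hi)
qed

lemma coroot_to_weight_orbit:
  "coroot_to_weight (coroot_wprod C ws (simple_coroot k))
     = (\<lambda>t. real_coords (wprod C ws (sr C k)) t / sym_factor k)"
proof (induction ws)
  case Nil
  have "coroot_to_weight (simple_coroot k) t = (\<Sum>l\<in>UNIV. if l = k then of_int (C k t) / sym_factor k else 0)"
    for t
    unfolding coroot_to_weight_def by (rule sum.cong) (auto simp: simple_coroot_def)
  then show ?case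
    by (auto simp: real_coords_def coord_sr)
next
  case (Cons i ws)
  then show ?case
    by (simp add: coroot_to_weight_coroot_refl real_refl_scale real_coords_srefl)
qed

lemma root_eq_if_coroot_eq:
  assumes h: "coroot_wprod C ws (simple_coroot k) = simple_coroot j"
  shows "wprod C ws (sr C k) = sr C j"
proof -
  have eq: "real_coords (sr C j) t / sym_factor j = real_coords (wprod C ws (sr C k)) t / sym_factor k" for t
    using coroot_to_weight_orbit[of ws k] coroot_to_weight_orbit[of "[]" j] h by (simp add: fun_eq_iff)
  have "pairing (wprod C ws (sr C k)) (coroot_wprod C ws (simple_coroot k)) = 2"
    by (simp add: pairing_sr_simple_coroot)
  then have "coord (wprod C ws (sr C k)) j = 2"
    using h pairing_scaled_simple_coroot[of _ 1 j] by simp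
  then have "sym_factor j = sym_factor k"
    using eq[of j] by (simp add: real_coords_def coord_sr)
  then have "real_coords (sr C j) = real_coords (wprod C ws (sr C k))"
    using eq sym_factor_pos[of k] by (auto simp: fun_eq_iff)
  then show ?thesis
    by (intro coord_eqI) (metis of_int_eq_iff real_coords_def)
qed

end

section \<open>The family \<open>\<chi>\<close>\<close>

text \<open>A root is recorded together with its coroot, as a pair \<open>(w \<alpha>\<^sub>k, w \<alpha>\<^sub>k\<^sup>\<or>)\<close>.\<close>

definition root_pairs :: "('i::finite \<Rightarrow> 'i \<Rightarrow> int) \<Rightarrow> ('i weight \<times> ('i \<Rightarrow> int)) set" where
  "root_pairs C = {(wprod C ws (sr C k), coroot_wprod C ws (simple_coroot k)) | ws k. True}"

definition pos_root_pairs :: "('i::finite \<Rightarrow> 'i \<Rightarrow> int) \<Rightarrow> ('i weight \<times> ('i \<Rightarrow> int)) set" where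
  "pos_root_pairs C = {p \<in> root_pairs C. nonneg (snd p)}"

definition neg_pairing_roots ::
    "('i::finite \<Rightarrow> 'i \<Rightarrow> int) \<Rightarrow> 'i weight \<Rightarrow> ('i weight \<times> ('i \<Rightarrow> int)) set" where
  "neg_pairing_roots C lam = {p \<in> pos_root_pairs C. pairing lam (snd p) < 0}"

definition inversions :: "('i::finite \<Rightarrow> 'i \<Rightarrow> int) \<Rightarrow> 'i list \<Rightarrow> ('i weight \<times> ('i \<Rightarrow> int)) set" where
  "inversions C ws = {p \<in> pos_root_pairs C. nonpos (coroot_wprod C (rev ws) (snd p))}"

lemma root_pairsI [intro]: "(wprod C ws (sr C k), coroot_wprod C ws (simple_coroot k)) \<in> root_pairs C"
  unfolding root_pairs_def by blast

lemma root_pairsE: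
  assumes "p \<in> root_pairs C"
  obtains ws k where "p = (wprod C ws (sr C k), coroot_wprod C ws (simple_coroot k))"
  using assms unfolding root_pairs_def by blast

lemma fst_root_pair_in_roots: "p \<in> root_pairs C \<Longrightarrow> fst p \<in> roots C"
  by (auto elim!: root_pairsE simp: roots_def)

context finite_cartan
begin

lemma root_pair_fst_ne_zero:
  assumes "p \<in> root_pairs C"
  shows "fst p \<noteq> 0"
proof -
  obtain ws k where "p = (wprod C ws (sr C k), coroot_wprod C ws (simple_coroot k))"
    using assms by (rule root_pairsE)
  then have "pairing (fst p) (snd p) = 2"
    by (simp add: pairing_sr_simple_coroot)
  then show ?thesis
    by auto
qed

lemma inversions_Nil: "inversions C [] = {}"
proof -
  have False if "p \<in> inversions C []" for p
  proof -
    from that have p: "p \<in> root_pairs C" "nonneg (snd p)" "nonpos (snd p)"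
      by (auto simp: inversions_def pos_root_pairs_def)
    then have "snd p = (\<lambda>_. 0)"
      by (intro ext) (metis antisym nonneg_def nonpos_def)
    with p(1) show False
      by (auto elim: root_pairsE simp: coroot_wprod_simple_coroot_ne_zero)
  qed
  then show ?thesis
    by blast
qed

definition refl_pair :: "'i \<Rightarrow> 'i weight \<times> ('i \<Rightarrow> int) \<Rightarrow> 'i weight \<times> ('i \<Rightarrow> int)" where
  "refl_pair k p = (srefl C k (fst p), coroot_refl C k (snd p))"

lemma refl_pair_refl_pair [simp]: "refl_pair k (refl_pair k p) = p"
  by (simp add: refl_pair_def)

lemma inversions_Cons:
  "inversions C (k # ws) \<subseteq> insert (sr C k, simple_coroot k) (refl_pair k ` inversions C ws)"
proof
  fix p
  assume "p \<in> inversions C (k # ws)"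
  then have p: "p \<in> root_pairs C" "nonneg (snd p)"
    and np: "nonpos (coroot_wprod C (rev ws) (coroot_refl C k (snd p)))"
    by (auto simp: inversions_def pos_root_pairs_def)
  obtain us l where p_eq: "p = (wprod C us (sr C l), coroot_wprod C us (simple_coroot l))"
    using p(1) by (rule root_pairsE)
  show "p \<in> insert (sr C k, simple_coroot k) (refl_pair k ` inversions C ws)"
  proof (cases "coroot_wprod C us (simple_coroot l) = simple_coroot k")
    case True
    then show ?thesis
      using root_eq_if_coroot_eq[OF True] p_eq by simp
  next
    case False
    have "refl_pair k p = (wprod C (k # us) (sr C l), coroot_wprod C (k # us) (simple_coroot l))"
      by (simp add: refl_pair_def p_eq)
    then have "refl_pair k p \<in> root_pairs C"
      by (simp only: root_pairsI)
    moreover have "nonneg (coroot_refl C k (coroot_wprod C us (simple_coroot l)))"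
      using coroot_refl_nonneg False p(2) p_eq by simp
    ultimately have "refl_pair k p \<in> inversions C ws"
      using np by (auto simp: inversions_def pos_root_pairs_def refl_pair_def p_eq)
    then show ?thesis
      by (metis imageI insertCI refl_pair_refl_pair)
  qed
qed

lemma finite_inversions: "finite (inversions C ws)"
  by (induction ws) (auto simp: inversions_Nil intro: finite_subset[OF inversions_Cons])

lemma neg_pairing_roots_subset_inversions:
  "neg_pairing_roots C (wprod C ws (fw j)) \<subseteq> inversions C ws"
proof
  fix p
  assume "p \<in> neg_pairing_roots C (wprod C ws (fw j))"
  then have p: "p \<in> root_pairs C" "nonneg (snd p)" "pairing (wprod C ws (fw j)) (snd p) < 0"
    by (auto simp: neg_pairing_roots_def pos_root_pairs_def)
  obtain us l where p_eq: "p = (wprod C us (sr C l), coroot_wprod C us (simple_coroot l))"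
    using p(1) by (rule root_pairsE)
  have "coroot_wprod C (rev ws) (snd p) = coroot_wprod C (rev ws @ us) (simple_coroot l)"
    by (simp add: p_eq)
  then have "nonneg (coroot_wprod C (rev ws) (snd p)) \<or> nonpos (coroot_wprod C (rev ws) (snd p))"
    using coroot_nonneg_or_nonpos[of "rev ws @ us" l] by simp
  moreover have "coroot_wprod C (rev ws) (snd p) j < 0"
    using p(3) by (simp add: pairing_wprod)
  ultimately have "nonpos (coroot_wprod C (rev ws) (snd p))"
    unfolding nonneg_def by (metis not_le)
  then show "p \<in> inversions C ws"
    using p by (simp add: inversions_def pos_root_pairs_def)
qed

lemma finite_neg_pairing_roots: "finite (neg_pairing_roots C (wprod C ws (fw j)))"
  using neg_pairing_roots_subset_inversions finite_inversions by (rule finite_subset)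

lemma coroot_exponent_identity:
  assumes g: "g = coroot_wprod C us (simple_coroot k)" and ne: "g \<noteq> (\<lambda>l. - simple_coroot i l)"
  shows "min 0 (coroot_refl C i g i) + min 0 (g i)
       = (if g = simple_coroot i then -1 else 0) + (\<Sum>j\<in>UNIV - {i}. min 0 (g j) * - C i j)"
proof (cases "nonneg g")
  case True
  have sum0: "(\<Sum>j\<in>UNIV - {i}. min 0 (g j) * - C i j) = 0"
    by (rule sum.neutral) (use True in \<open>auto simp: nonneg_def\<close>)
  show ?thesis
  proof (cases "g = simple_coroot i")
    case True
    then show ?thesis
      using sum0 by (simp add: coroot_refl_simple_coroot) (simp add: simple_coroot_def)
  next
    case False
    then have "nonneg (coroot_refl C i g)"
      using coroot_refl_nonneg \<open>nonneg g\<close> g by blast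
    then show ?thesis
      using False sum0 \<open>nonneg g\<close> by (simp add: nonneg_def)
  qed
next
  case False
  then have np: "nonpos g"
    using coroot_nonneg_or_nonpos g by blast
  have "(\<lambda>l. - g l) = coroot_wprod C (us @ [k]) (simple_coroot k)"
    by (simp add: g coroot_refl_simple_coroot coroot_wprod_uminus)
  moreover have "(\<lambda>l. - g l) \<noteq> simple_coroot i"
    using ne by (metis minus_minus)
  moreover have "nonneg (\<lambda>l. - g l)"
    using np by (simp add: nonneg_def nonpos_def)
  ultimately have "nonneg (coroot_refl C i (\<lambda>l. - g l))"
    using coroot_refl_nonneg by metis
  then have a: "min 0 (coroot_refl C i g i) = coroot_refl C i g i"
    by (simp add: coroot_refl_uminus nonneg_def)
  have "g \<noteq> simple_coroot i"
    using False by (auto simp: nonneg_def simple_coroot_def split: if_splits)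
  moreover have "(\<Sum>j\<in>UNIV - {i}. min 0 (g j) * - C i j) = - (\<Sum>l\<in>UNIV - {i}. C i l * g l)"
  proof -
    have "min 0 (g j) = g j" for j
      using np by (simp add: nonpos_def min_absorb2)
    then show ?thesis
      by (simp add: sum_negf mult.commute)
  qed
  moreover have "coroot_refl C i g i = g i - (2 * g i + (\<Sum>l\<in>UNIV - {i}. C i l * g l))"
    using sum.remove[of UNIV i "\<lambda>l. C i l * g l"] by (simp add: coroot_refl_def)
  ultimately show ?thesis
    using a np by (simp add: nonpos_def)
qed

lemma min_pairing_relation:
  assumes nn: "nonneg (coroot_wprod C ws (simple_coroot i))" and p: "p \<in> pos_root_pairs C"
  shows "min 0 (pairing (wprod C (ws @ [i]) (fw i)) (snd p)) + min 0 (pairing (wprod C ws (fw i)) (snd p))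
       = (if p = (wprod C ws (sr C i), coroot_wprod C ws (simple_coroot i)) then -1 else 0)
         + (\<Sum>j\<in>UNIV - {i}. min 0 (pairing (wprod C ws (fw j)) (snd p)) * - C i j)"
proof -
  from p have p_root: "p \<in> root_pairs C" and p_nn: "nonneg (snd p)"
    by (auto simp: pos_root_pairs_def)
  obtain us k where p_eq: "p = (wprod C us (sr C k), coroot_wprod C us (simple_coroot k))"
    using p_root by (rule root_pairsE)
  define g where "g = coroot_wprod C (rev ws) (snd p)"
  have g_orbit: "g = coroot_wprod C (rev ws @ us) (simple_coroot k)"
    by (simp add: g_def p_eq)
  have snd_p: "snd p = coroot_wprod C ws g"
    by (simp add: g_def)
  have "g \<noteq> (\<lambda>l. - simple_coroot i l)"
  proof
    assume "g = (\<lambda>l. - simple_coroot i l)"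
    then have "snd p = (\<lambda>l. - coroot_wprod C ws (simple_coroot i) l)"
      by (simp add: snd_p coroot_wprod_uminus)
    then have "coroot_wprod C ws (simple_coroot i) = (\<lambda>_. 0)"
      using nn p_nn by (intro ext) (metis antisym neg_0_le_iff_le nonneg_def)
    then show False
      using coroot_wprod_simple_coroot_ne_zero by blast
  qed
  note identity = coroot_exponent_identity[OF g_orbit this]
  have "g = simple_coroot i \<longleftrightarrow> p = (wprod C ws (sr C i), coroot_wprod C ws (simple_coroot i))"
  proof
    assume g_i: "g = simple_coroot i"
    then have "wprod C (rev ws @ us) (sr C k) = sr C i"
      using root_eq_if_coroot_eq g_orbit by metis
    then have "wprod C us (sr C k) = wprod C ws (sr C i)"
      by (metis wprod_append comp_apply wprod_wprod_rev)
    then show "p = (wprod C ws (sr C i), coroot_wprod C ws (simple_coroot i))"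
      using g_i snd_p by (simp add: p_eq)
  qed (simp add: g_def)
  moreover have "pairing (wprod C ws (fw j)) (snd p) = g j" for j
    by (simp add: pairing_wprod g_def)
  moreover have "pairing (wprod C (ws @ [i]) (fw i)) (snd p) = coroot_refl C i g i"
    using pairing_wprod[of "ws @ [i]" "fw i" "snd p"] by (simp add: g_def)
  ultimately show ?thesis
    using identity by simp
qed

end

definition root_factor :: "'i::{finite,linorder} weight \<Rightarrow> 'i grpring fract" where
  "root_factor \<beta> = emb (1 - gb (- \<beta>))"

definition chi :: "('i::{finite,linorder} \<Rightarrow> 'i \<Rightarrow> int) \<Rightarrow> 'i weight \<Rightarrow> 'i grpring fract" where
  "chi C lam = (\<Prod>p\<in>neg_pairing_roots C lam. root_factor (fst p) powi pairing lam (snd p))"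

lemma root_factor_ne_zero:
  assumes "\<beta> \<noteq> 0"
  shows "root_factor \<beta> \<noteq> 0"
proof -
  have "coord (1 - gb (- \<beta>)) 0 = 1"
    using assms by (simp add: gb_def Poly_Mapping.lookup_minus Poly_Mapping.lookup_one
        Poly_Mapping.lookup_single when_def)
  then have "1 - gb (- \<beta>) \<noteq> 0"
    by auto
  then show ?thesis
    by (simp add: root_factor_def emb_def Zero_fract_def eq_fract)
qed

lemma chi_eq_prod_superset:
  assumes "finite F" "neg_pairing_roots C lam \<subseteq> F" "F \<subseteq> pos_root_pairs C"
  shows "chi C lam = (\<Prod>p\<in>F. root_factor (fst p) powi min 0 (pairing lam (snd p)))"
proof -
  have "chi C lam = (\<Prod>p\<in>neg_pairing_roots C lam. root_factor (fst p) powi min 0 (pairing lam (snd p)))"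
    unfolding chi_def by (rule prod.cong) (auto simp: neg_pairing_roots_def)
  also have "\<dots> = (\<Prod>p\<in>F. root_factor (fst p) powi min 0 (pairing lam (snd p)))"
    by (rule prod.mono_neutral_left[OF assms(1,2)])
      (use assms(3) in \<open>auto simp: neg_pairing_roots_def min_def\<close>)
  finally show ?thesis .
qed

lemma chi_fw: "chi C (fw i) = 1"
proof -
  have "neg_pairing_roots C (fw i) = {}"
    by (auto simp: neg_pairing_roots_def pos_root_pairs_def nonneg_def not_le[symmetric])
  then show ?thesis
    by (simp add: chi_def)
qed

lemma gen_subring_prod:
  "finite A \<Longrightarrow> (\<And>a. a \<in> A \<Longrightarrow> f a \<in> gen_subring S) \<Longrightarrow> prod f A \<in> gen_subring S"
  by (induction A rule: finite_induct) (auto intro: gen_subring.intros)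

lemma gen_subring_power: "x \<in> gen_subring S \<Longrightarrow> x ^ n \<in> gen_subring S"
  by (induction n) (auto intro: gen_subring.intros)

lemma prod_power_int: "finite A \<Longrightarrow> (\<Prod>a\<in>A. f a) powi n = (\<Prod>a\<in>A. (f a :: 'a::field) powi n)"
  by (induction A rule: finite_induct) (auto simp: power_int_mult_distrib)

lemma power_int_sum:
  assumes "(x::'a::field) \<noteq> 0" "finite J"
  shows "x powi (\<Sum>j\<in>J. a j) = (\<Prod>j\<in>J. x powi a j)"
  using assms(2) by (induction J rule: finite_induct) (simp_all add: power_int_add assms(1))

context finite_cartan
begin

lemma chi_in_denom_ring: "chi C (wprod C ws (fw j)) \<in> denom_ring C"
  unfolding chi_def denom_ring_def
proof (rule gen_subring_prod[OF finite_neg_pairing_roots])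
  fix p
  assume "p \<in> neg_pairing_roots C (wprod C ws (fw j))"
  then have p: "p \<in> root_pairs C" "pairing (wprod C ws (fw j)) (snd p) < 0"
    by (auto simp: neg_pairing_roots_def pos_root_pairs_def)
  have "inverse (root_factor (fst p)) \<in> gen_subring {inverse (emb (1 - gb (- a))) | a. a \<in> roots C}"
    using fst_root_pair_in_roots[OF p(1)] unfolding root_factor_def by (blast intro: gen_subring.gen)
  then show "root_factor (fst p) powi pairing (wprod C ws (fw j)) (snd p)
      \<in> gen_subring {inverse (emb (1 - gb (- a))) | a. a \<in> roots C}"
    using p(2) by (simp add: power_int_def gen_subring_power)
qed

text \<open>All the \<open>\<chi>\<close> involved are written as products over one finite set \<open>F\<close> of positive
  roots; then the relation holds factor by factor, by \<open>min_pairing_relation\<close>.\<close>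

lemma chi_relation:
  assumes w: "w \<in> weyl C" and len: "wlen C (w \<circ> srefl C i) = wlen C w + 1"
  shows "chi C ((w \<circ> srefl C i) (fw i)) * chi C (w (fw i))
       = inverse (root_factor (w (sr C i))) * (\<Prod>j\<in>UNIV - {i}. chi C (w (fw j)) powi - C i j)"
proof -
  obtain ws where w_eq: "w = wprod C ws"
    using w by (rule weylE)
  have nn: "nonneg (coroot_wprod C ws (simple_coroot i))"
    using coroot_act_simple_coroot_nonneg[OF w, of i] len by (simp add: w_eq)
  define p0 where "p0 = (wprod C ws (sr C i), coroot_wprod C ws (simple_coroot i))"
  define e where "e = (\<lambda>lam (p :: 'i weight \<times> ('i \<Rightarrow> int)). min 0 (pairing lam (snd p)))"
  define F where "F = neg_pairing_roots C (wprod C (ws @ [i]) (fw i))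
    \<union> (\<Union>j. neg_pairing_roots C (wprod C ws (fw j))) \<union> {p0}"
  have F: "finite F" "F \<subseteq> pos_root_pairs C" "p0 \<in> F"
    unfolding F_def using nn finite_neg_pairing_roots[of "ws @ [i]" i]
    by (auto intro!: finite_neg_pairing_roots simp del: wprod_append)
      (auto simp: p0_def neg_pairing_roots_def pos_root_pairs_def)
  have nz: "root_factor (fst p) \<noteq> 0" if "p \<in> F" for p
    using that F(2) by (intro root_factor_ne_zero root_pair_fst_ne_zero) (auto simp: pos_root_pairs_def)
  have chi_F: "chi C lam = (\<Prod>p\<in>F. root_factor (fst p) powi e lam p)"
    if "lam \<in> insert (wprod C (ws @ [i]) (fw i)) (range (\<lambda>j. wprod C ws (fw j)))" for lam
    using that F by (auto simp: e_def F_def intro!: chi_eq_prod_superset)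
  have "chi C ((w \<circ> srefl C i) (fw i)) * chi C (w (fw i))
      = (\<Prod>p\<in>F. root_factor (fst p) powi (e (wprod C (ws @ [i]) (fw i)) p + e (wprod C ws (fw i)) p))"
    by (simp add: chi_F w_eq power_int_add nz prod.distrib)
  also have "\<dots> = (\<Prod>p\<in>F. root_factor (fst p) powi
      ((if p = p0 then -1 else 0) + (\<Sum>j\<in>UNIV - {i}. e (wprod C ws (fw j)) p * - C i j)))"
    unfolding e_def p0_def
    by (intro prod.cong refl) (simp only: min_pairing_relation[OF nn] subsetD[OF F(2)])
  also have "\<dots> = (\<Prod>p\<in>F. root_factor (fst p) powi (if p = p0 then -1 else 0))
      * (\<Prod>p\<in>F. \<Prod>j\<in>UNIV - {i}. (root_factor (fst p) powi e (wprod C ws (fw j)) p) powi - C i j)"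
    by (simp add: power_int_add nz power_int_sum prod.distrib flip: power_int_mult)
  also have "(\<Prod>p\<in>F. root_factor (fst p) powi (if p = p0 then -1 else 0)) = inverse (root_factor (w (sr C i)))"
    using F(1,3) by (simp add: if_distrib[of "\<lambda>k. _ powi k"] prod.delta' w_eq p0_def cong: if_cong)
  also have "(\<Prod>p\<in>F. \<Prod>j\<in>UNIV - {i}. (root_factor (fst p) powi e (wprod C ws (fw j)) p) powi - C i j)
      = (\<Prod>j\<in>UNIV - {i}. chi C (w (fw j)) powi - C i j)"
    by (subst prod.swap) (simp add: chi_F w_eq prod_power_int F(1))
  finally show ?thesis .
qed

lemma chi_family_chi: "chi_family C (chi C)"
  unfolding chi_family_def
proof (intro conjI ballI allI impI)
  fix lam
  assume "lam \<in> wt_orbits C"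
  then obtain ws j where "lam = wprod C ws (fw j)"
    by (auto simp: wt_orbits_def elim!: weylE)
  then show "chi C lam \<in> denom_ring C"
    by (simp only: chi_in_denom_ring)
next
  fix w i
  assume "w \<in> weyl C" "wlen C (w \<circ> srefl C i) = wlen C w + 1"
  from chi_relation[OF this]
  show "chi C ((w \<circ> srefl C i) (fw i)) * chi C (w (fw i))
      = inverse (emb (1 - gb (- w (sr C i)))) * (\<Prod>j\<in>UNIV - {i}. chi C (w (fw j)) powi - C i j)"
    by (simp only: root_factor_def)
qed (rule chi_fw)

end

section \<open>Uniqueness\<close>

lemma orbit_fw_last_step:
  assumes "w \<in> weyl C"
  shows "w (fw k) = fw k \<or> (\<exists>v\<in>weyl C. wlen C v < wlen C w
           \<and> wlen C (v \<circ> srefl C k) = wlen C v + 1 \<and> w (fw k) = (v \<circ> srefl C k) (fw k))"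
proof -
  define A where "A = {u \<in> weyl C. u (fw k) = w (fw k)}"
  have "w \<in> A"
    using assms by (simp add: A_def)
  then obtain u where u: "u \<in> weyl C" "u (fw k) = w (fw k)"
    and u_min: "\<And>u'. u' \<in> A \<Longrightarrow> wlen C u \<le> wlen C u'"
    using ex_has_least_nat[of "\<lambda>u. u \<in> A" w "wlen C"] unfolding A_def by blast
  show ?thesis
  proof (cases "wlen C u = 0")
    case True
    then show ?thesis
      using u by (simp add: wlen_eq_0_iff)
  next
    case False
    obtain us where us: "length us = wlen C u" "wprod C us = u"
      using u(1) by (rule reduced_wordE)
    with False obtain vs j where usd: "us = vs @ [j]"
      by (metis append_butlast_last_id length_0_conv)
    define v where "v = wprod C vs"
    have u_eq: "u = v \<circ> srefl C j"
      using us(2) usd by (simp add: v_def)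
    have v_lt: "wlen C v < wlen C u"
      using wlen_wprod_le[of C vs] us(1) usd by (simp add: v_def)
    have "j = k"
    proof (rule ccontr)
      assume "j \<noteq> k"
      then have "v \<in> A"
        using u(2) u_eq srefl_fw_other[of j k C] by (simp add: A_def v_def)
      then show False
        using u_min v_lt by fastforce
    qed
    have "wlen C u \<le> wlen C w"
      using u_min \<open>w \<in> A\<close> .
    moreover have "wlen C (v \<circ> srefl C k) = wlen C v + 1"
      using wlen_comp_srefl_le[of v C k] v_lt u_eq \<open>j = k\<close> by (simp add: v_def)
    moreover have "v \<in> weyl C" "w (fw k) = (v \<circ> srefl C k) (fw k)"
      using u(2) u_eq \<open>j = k\<close> by (simp_all add: v_def)
    ultimately show ?thesis
      using v_lt by (intro disjI2 bexI[of _ v]) auto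
  qed
qed

context finite_cartan
begin

lemma chi_family_unique:
  assumes c: "chi_family C c" and c': "chi_family C c'" and w: "w \<in> weyl C"
  shows "c' (w (fw k)) = c (w (fw k)) \<and> c (w (fw k)) \<noteq> 0"
  using w
proof (induction "wlen C w" arbitrary: w k rule: less_induct)
  case less
  consider "w (fw k) = fw k"
    | v where "v \<in> weyl C" "wlen C v < wlen C w" "wlen C (v \<circ> srefl C k) = wlen C v + 1"
        "w (fw k) = (v \<circ> srefl C k) (fw k)"
    using orbit_fw_last_step[OF less.prems] by blast
  then show ?case
  proof cases
    case 1
    then show ?thesis
      using c c' by (simp add: chi_family_def)
  next
    case 2
    note IH = less.hyps[OF 2(2,1)]
    define R where "R = inverse (emb (1 - gb (- v (sr C k))))
      * (\<Prod>j\<in>UNIV - {k}. c (v (fw j)) powi - C k j)"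
    have rel: "c (w (fw k)) * c (v (fw k)) = R"
      using c 2(1,3) unfolding chi_family_def R_def by (simp add: 2(4))
    have "c' (w (fw k)) * c' (v (fw k))
        = inverse (emb (1 - gb (- v (sr C k)))) * (\<Prod>j\<in>UNIV - {k}. c' (v (fw j)) powi - C k j)"
      using c' 2(1,3) unfolding chi_family_def by (simp add: 2(4))
    also have "\<dots> = R"
      using IH by (simp add: R_def)
    finally have rel': "c' (w (fw k)) * c' (v (fw k)) = R" .
    obtain vs where "v = wprod C vs"
      using 2(1) by (rule weylE)
    then have "root_factor (v (sr C k)) \<noteq> 0"
      using root_pair_fst_ne_zero[OF root_pairsI] by (simp add: root_factor_ne_zero)
    then have "R \<noteq> 0"
      using IH by (simp add: R_def root_factor_def prod_zero_iff power_int_not_zero)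
    then show ?thesis
      using rel rel' IH by (metis mult_right_cancel mult_zero_left)
  qed
qed

end

theorem mainTheorem10:
  fixes C :: "'i::{finite,linorder} \<Rightarrow> 'i \<Rightarrow> int"
  assumes "cartan_simple C"
  shows "\<exists>\<chi>. chi_family C \<chi> \<and>
           (\<forall>\<chi>'. chi_family C \<chi>' \<longrightarrow> (\<forall>lam\<in>wt_orbits C. \<chi>' lam = \<chi> lam))"
proof -
  interpret finite_cartan C
    by unfold_locales (rule assms)
  show ?thesis
    using chi_family_chi chi_family_unique unfolding wt_orbits_def by blast
qed

end
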